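(* For every integer $n>1$, $$\delta_C(n,0) \geqslant \frac{4 - 2\sin(\pi/n)}{2\sin(\pi/n)} \geqslant \frac{2n}{\pi} - 1.$$
   Context: For a graph $G$ whose vertices are points in $\mathbb{R}^D$, each edge $(u,v)$ has weight equal to the Euclidean distance $d(u,v)$, and $d_G(u,v)$ is the length of a shortest path in $G$ between $u$ and $v$. The dilation of $G$ is $\Delta(G)=\max_{u\neq v\in V(G)} d_G(u,v)/d(u,v)$ (infinite if $G$ is disconnected). For a finite set $S$ of $n$ points and an integer $k\ge 0$, $\Delta(S,k)$ is the minimum of $\Delta(G)$ over all graphs $G$ with vertex set exactly $S$ and exactly $n-1+k$ edges. $\delta_C(n,k)$ is the supremum of $\Delta(S,k)$ over all sets $S$ of $n$ points in $\mathbb{R}^2$ in convex position (all points lie on the boundary of their convex hull). *)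

theory Defs
  imports "HOL-Analysis.Analysis" "HOL-Library.Extended_Real"
begin

type_synonym point = "real^2"

definition graph_edges :: "point set \<Rightarrow> point set set \<Rightarrow> bool" where
  "graph_edges S E \<longleftrightarrow> E \<subseteq> {{u, v} | u v. u \<in> S \<and> v \<in> S \<and> u \<noteq> v}"

definition is_walk :: "point set set \<Rightarrow> point \<Rightarrow> point \<Rightarrow> point list \<Rightarrow> bool" where
  "is_walk E u v xs \<longleftrightarrow> xs \<noteq> [] \<and> hd xs = u \<and> last xs = v \<and>
     (\<forall>i < length xs - 1. {xs ! i, xs ! Suc i} \<in> E)"

definition walk_length :: "point list \<Rightarrow> real" where
  "walk_length xs = (\<Sum>i < length xs - 1. dist (xs ! i) (xs ! Suc i))"

text \<open>Shortest-path distance (infinite if no path).\<close>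
definition graph_dist :: "point set set \<Rightarrow> point \<Rightarrow> point \<Rightarrow> ereal" where
  "graph_dist E u v = Inf {ereal (walk_length xs) | xs. is_walk E u v xs}"

definition dilation :: "point set \<Rightarrow> point set set \<Rightarrow> ereal" where
  "dilation S E = Sup {graph_dist E u v / ereal (dist u v) | u v. u \<in> S \<and> v \<in> S \<and> u \<noteq> v}"

definition min_dilation :: "point set \<Rightarrow> nat \<Rightarrow> ereal" where
  "min_dilation S k = Inf {dilation S E | E. graph_edges S E \<and> finite E \<and> card E = card S - 1 + k}"

definition convex_position :: "point set \<Rightarrow> bool" where
  "convex_position S \<longleftrightarrow> S \<subseteq> frontier (convex hull S)"

definition delta_C :: "nat \<Rightarrow> nat \<Rightarrow> ereal" where
  "delta_C n k = Sup {min_dilation S k | S. finite S \<and> card S = n \<and> convex_position S}"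

end

(*
  Take the vertices of a regular n-gon; consecutive ones are at distance s = 2 sin(pi/n).
  Measure a step between two vertices by its signed displacement d along the shorter
  arc, |d| <= n/2; by Jordan's inequality sin x >= 2x/pi such a step has length at least
  4|d|/n.  On a spanning tree the displacement is a coboundary: d(a,b) = psi(b) - psi(a)
  along every edge.  If every two consecutive vertices were joined in the tree by a path
  shorter than 4 - s <= 4 - 4/n, the total displacement of that path would be an integer
  congruent to 1 mod n and of absolute value less than n - 1, hence equal to 1; summing
  psi(v_(k+1)) - psi(v_k) = 1 around the polygon would then give 0 = n.  So some pair of
  neighbours at distance s has tree distance at least 4 - s.  The second inequality is
  sin x <= x.
*)

theory Submission
  imports Defs
begin

lemma Jordan_inequality:
  fixes x :: real
  assumes "0 \<le> x" "x \<le> pi / 2"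
  shows "2 * x / pi \<le> sin x"
proof -
  have "concave_on {0..pi/2} sin"
    by (rule f''_le0_imp_concave[where f'=cos and f''="\<lambda>x. - sin x"])
       (auto intro!: derivative_eq_intros simp: sin_ge_zero)
  then have "(sin (pi/2) - sin 0) / (pi/2 - 0) * (x - 0) + sin 0 \<le> sin x"
    using concave_onD_Icc'[of 0 "pi/2" sin x] assms by simp
  then show ?thesis by simp
qed

text \<open>For \<open>\<bar>b - a\<bar> < n\<close> this is the representative of \<open>b - a\<close> modulo \<open>n\<close> in \<open>[-n/2, n/2]\<close>,
  i.e. the signed number of sides from vertex \<open>a\<close> to vertex \<open>b\<close> along the shorter arc.
  The ties \<open>2 (b - a) = \<plusminus>n\<close> are left unreduced, which keeps it antisymmetric.\<close>
definition cyclic_disp :: "nat \<Rightarrow> int \<Rightarrow> int \<Rightarrow> int" where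
  "cyclic_disp n a b =
     (if 2 * (b - a) > int n then b - a - int n
      else if 2 * (b - a) < - int n then b - a + int n else b - a)"

lemma cyclic_disp_antisym: "cyclic_disp n a b = - cyclic_disp n b a"
  unfolding cyclic_disp_def by auto

lemma cyclic_disp_cong: "int n dvd cyclic_disp n a b - (b - a)"
  unfolding cyclic_disp_def by auto

lemma cyclic_disp_bound: "\<bar>b - a\<bar> < int n \<Longrightarrow> 2 * \<bar>cyclic_disp n a b\<bar> \<le> int n"
  unfolding cyclic_disp_def by (auto simp: abs_if)

lemma abs_sin_add_int_mult_pi: "\<bar>sin (x + of_int k * pi)\<bar> = \<bar>sin x\<bar>"
proof -
  have "\<bar>cos (of_int k * pi)\<bar> = 1"
    by (cases k rule: int_cases2) (simp_all add: mult.commute)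
  then show ?thesis
    by (simp add: sin_add abs_mult mult.commute)
qed

definition polygon_vertex :: "nat \<Rightarrow> nat \<Rightarrow> point" where
  "polygon_vertex n j = vector [cos (2 * pi * j / n), sin (2 * pi * j / n)]"

definition polygon_vertices :: "nat \<Rightarrow> point set" where
  "polygon_vertices n = polygon_vertex n ` {..<n}"

lemma norm_polygon_vertex: "norm (polygon_vertex n j) = 1"
  unfolding polygon_vertex_def
  by (simp add: norm_eq_sqrt_inner inner_vec_def sum_2 power2_eq_square[symmetric])

lemma dist_polygon_vertex:
  "dist (polygon_vertex n a) (polygon_vertex n b) = 2 * \<bar>sin (pi * (real a - real b) / n)\<bar>"
proof -
  define A where "A = 2 * pi * a / n"
  define B where "B = 2 * pi * b / n"
  have "(dist (polygon_vertex n a) (polygon_vertex n b))\<^sup>2 = (cos A - cos B)\<^sup>2 + (sin A - sin B)\<^sup>2"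
    unfolding polygon_vertex_def dist_norm A_def B_def
    by (simp add: norm_eq_sqrt_inner inner_vec_def sum_2 power2_eq_square)
  also have "\<dots> = 2 - 2 * cos (A - B)"
    by (simp add: cos_diff power2_eq_square algebra_simps)
  also have "\<dots> = (2 * sin ((A - B) / 2))\<^sup>2"
  proof -
    have "cos (A - B) = cos (2 * ((A - B) / 2))" by (simp only: mult_2 field_sum_of_halves)
    then show ?thesis by (simp only: cos_double_sin) (simp add: power2_eq_square)
  qed
  finally have "dist (polygon_vertex n a) (polygon_vertex n b) = \<bar>2 * sin ((A - B) / 2)\<bar>"
    by (metis abs_of_nonneg real_sqrt_abs zero_le_dist)
  moreover have "(A - B) / 2 = pi * (real a - real b) / n"
    unfolding A_def B_def by (cases "n = 0") (simp_all add: field_simps)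
  ultimately show ?thesis by (simp add: abs_mult)
qed

lemma dist_polygon_vertex_ge_cyclic_disp:
  assumes "a < n" "b < n"
  shows "4 * \<bar>cyclic_disp n a b\<bar> / n \<le> dist (polygon_vertex n a) (polygon_vertex n b)"
proof -
  define d where "d = cyclic_disp n a b"
  define x where "x = pi * \<bar>d\<bar> / n"
  have n_pos: "real n > 0" using assms by simp
  have "2 * \<bar>d\<bar> \<le> int n"
    unfolding d_def using assms by (intro cyclic_disp_bound) simp
  then have "2 * \<bar>real_of_int d\<bar> \<le> real n"
    by linarith
  then have x: "0 \<le> x" "x \<le> pi / 2"
    unfolding x_def using n_pos by (simp_all add: field_simps)
  obtain c where "d - (int b - int a) = int n * c"
    using cyclic_disp_cong[of n a b] unfolding d_def by (elim dvdE)
  then have "real_of_int (d - (int b - int a)) = real_of_int (int n * c)"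
    by (rule arg_cong)
  then have "real a - real b = real n * of_int c - of_int d"
    by simp
  then have "pi * (real a - real b) / n = pi * (real n * of_int c - of_int d) / n"
    by (simp only:)
  also have "\<dots> = - (pi * d / n) + of_int c * pi"
    using n_pos by (simp add: field_simps)
  finally have "\<bar>sin (pi * (real a - real b) / n)\<bar> = \<bar>sin (pi * d / n)\<bar>"
    by (simp only: abs_sin_add_int_mult_pi sin_minus abs_minus)
  also have "\<dots> = \<bar>sin x\<bar>"
    unfolding x_def by (cases "d \<ge> 0") simp_all
  also have "\<dots> = sin x"
    using x sin_ge_zero[of x] pi_gt_zero by simp
  finally have "dist (polygon_vertex n a) (polygon_vertex n b) = 2 * sin x"
    by (simp add: dist_polygon_vertex)
  moreover have "2 * x / pi \<le> sin x"
    using x by (rule Jordan_inequality)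
  ultimately show ?thesis
    unfolding d_def[symmetric] x_def using n_pos by (simp add: field_simps)
qed

lemma inj_on_polygon_vertex: "inj_on (polygon_vertex n) {..<n}"
proof (rule inj_onI)
  fix a b
  assume ab: "a \<in> {..<n}" "b \<in> {..<n}" and "polygon_vertex n a = polygon_vertex n b"
  then have "cyclic_disp n a b = 0"
    using dist_polygon_vertex_ge_cyclic_disp[of a n b] by (simp add: divide_le_0_iff)
  then have "int n dvd int a - int b"
    using cyclic_disp_cong[of n a b] by (simp add: dvd_diff_commute)
  moreover have "\<bar>int a - int b\<bar> < int n"
    using ab by auto
  ultimately show "a = b"
    using dvd_imp_le_int[of "int a - int b" "int n"] by auto
qed

lemma card_polygon_vertices: "card (polygon_vertices n) = n"
  unfolding polygon_vertices_def by (simp add: card_image inj_on_polygon_vertex)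

lemma dist_polygon_vertex_Suc:
  assumes "k < n"
  shows "dist (polygon_vertex n k) (polygon_vertex n (Suc k mod n)) = 2 * sin (pi / n)"
proof -
  have "0 \<le> sin (pi / n)"
    using assms by (intro sin_ge_zero) (simp_all add: divide_le_eq mult_le_cancel_left1)
  moreover have "\<bar>sin (pi * (real k - real (Suc k mod n)) / n)\<bar> = \<bar>sin (pi / n)\<bar>"
  proof (cases "Suc k < n")
    case True
    then show ?thesis by (simp add: field_simps)
  next
    case False
    with assms have "Suc k = n" by simp
    then have "pi * (real k - real (Suc k mod n)) / n = pi - pi / n"
      by (auto simp: field_simps)
    then show ?thesis by simp
  qed
  ultimately show ?thesis
    by (simp add: dist_polygon_vertex)
qed

lemma convex_position_polygon_vertices: "convex_position (polygon_vertices n)"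
  unfolding convex_position_def
proof
  fix x assume x: "x \<in> polygon_vertices n"
  have "polygon_vertices n \<subseteq> cball 0 1"
    unfolding polygon_vertices_def by (auto simp: norm_polygon_vertex)
  then have "convex hull polygon_vertices n \<subseteq> cball 0 1"
    by (rule hull_minimal) (rule convex_cball)
  then have "interior (convex hull polygon_vertices n) \<subseteq> ball 0 1"
    using interior_mono[of "convex hull polygon_vertices n" "cball 0 1"] by simp
  moreover have "norm x = 1"
    using x unfolding polygon_vertices_def by (auto simp: norm_polygon_vertex)
  ultimately have "x \<notin> interior (convex hull polygon_vertices n)"
    by (auto simp: subset_iff)
  moreover have "x \<in> closure (convex hull polygon_vertices n)"
    using closure_subset hull_inc[OF x] by (rule subsetD)
  ultimately show "x \<in> frontier (convex hull polygon_vertices n)"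
    unfolding frontier_def by blast
qed

definition vertex_index :: "nat \<Rightarrow> point \<Rightarrow> nat" where
  "vertex_index n = the_inv_into {..<n} (polygon_vertex n)"

lemma vertex_index_polygon_vertex [simp]: "j < n \<Longrightarrow> vertex_index n (polygon_vertex n j) = j"
  unfolding vertex_index_def by (simp add: the_inv_into_f_f inj_on_polygon_vertex)

definition polygon_disp :: "nat \<Rightarrow> point \<Rightarrow> point \<Rightarrow> int" where
  "polygon_disp n x y = cyclic_disp n (vertex_index n x) (vertex_index n y)"

lemma polygon_disp_antisym: "polygon_disp n x y = - polygon_disp n y x"
  unfolding polygon_disp_def by (rule cyclic_disp_antisym)

lemma dist_ge_polygon_disp:
  assumes "x \<in> polygon_vertices n" "y \<in> polygon_vertices n"
  shows "4 * \<bar>real_of_int (polygon_disp n x y)\<bar> / n \<le> dist x y"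
  using assms dist_polygon_vertex_ge_cyclic_disp
  unfolding polygon_vertices_def polygon_disp_def by auto

definition sum_steps :: "('a \<Rightarrow> 'a \<Rightarrow> 'b::comm_monoid_add) \<Rightarrow> 'a list \<Rightarrow> 'b" where
  "sum_steps f xs = (\<Sum>i < length xs - 1. f (xs ! i) (xs ! Suc i))"

lemma sum_steps_diff:
  fixes \<psi> :: "'a \<Rightarrow> 'b::ab_group_add"
  assumes "xs \<noteq> []"
  shows "sum_steps (\<lambda>x y. \<psi> y - \<psi> x) xs = \<psi> (last xs) - \<psi> (hd xs)"
  unfolding sum_steps_def sum_lessThan_telescope[of "\<lambda>i. \<psi> (xs ! i)"]
  using assms by (simp add: hd_conv_nth last_conv_nth)

lemma polygon_disp_sum_steps_le_walk_length:
  assumes "set xs \<subseteq> polygon_vertices n"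
  shows "4 * \<bar>real_of_int (sum_steps (polygon_disp n) xs)\<bar> / n \<le> walk_length xs"
proof -
  let ?d = "\<lambda>i. real_of_int (polygon_disp n (xs ! i) (xs ! Suc i))"
  have "4 * \<bar>real_of_int (sum_steps (polygon_disp n) xs)\<bar> / n = 4 / n * \<bar>\<Sum>i < length xs - 1. ?d i\<bar>"
    unfolding sum_steps_def by simp
  also have "\<dots> \<le> 4 / n * (\<Sum>i < length xs - 1. \<bar>?d i\<bar>)"
    by (intro mult_left_mono sum_abs) auto
  also have "\<dots> = (\<Sum>i < length xs - 1. 4 * \<bar>?d i\<bar> / n)"
    by (simp add: sum_distrib_left)
  also have "\<dots> \<le> (\<Sum>i < length xs - 1. dist (xs ! i) (xs ! Suc i))"
    by (intro sum_mono dist_ge_polygon_disp) (auto intro!: subsetD[OF assms] nth_mem)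
  finally show ?thesis
    unfolding walk_length_def .
qed

lemma polygon_disp_sum_steps_cong:
  assumes "xs \<noteq> []"
  shows "int n dvd sum_steps (polygon_disp n) xs
    - (int (vertex_index n (last xs)) - int (vertex_index n (hd xs)))"
proof -
  let ?g = "\<lambda>x. int (vertex_index n x)"
  have "sum_steps (polygon_disp n) xs - (?g (last xs) - ?g (hd xs))
      = sum_steps (\<lambda>x y. polygon_disp n x y - (?g y - ?g x)) xs"
    using sum_steps_diff[OF assms, of ?g] by (simp add: sum_steps_def sum_subtractf)
  also have "int n dvd \<dots>"
    unfolding sum_steps_def polygon_disp_def by (intro dvd_sum) (simp add: cyclic_disp_cong)
  finally show ?thesis .
qed

lemma short_polygon_walk_disp:
  assumes "k < n" "set xs \<subseteq> polygon_vertices n" "xs \<noteq> []"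
    and "hd xs = polygon_vertex n k" "last xs = polygon_vertex n (Suc k mod n)"
    and "walk_length xs < 4 - 4 / n"
  shows "sum_steps (polygon_disp n) xs = 1"
proof -
  define \<delta> where "\<delta> = sum_steps (polygon_disp n) xs"
  have n_pos: "real n > 0" using assms(1) by simp
  have "4 * \<bar>real_of_int \<delta>\<bar> / n < 4 - 4 / n"
    unfolding \<delta>_def using polygon_disp_sum_steps_le_walk_length[OF assms(2)] assms(6) by simp
  then have "\<bar>\<delta>\<bar> < int n - 1"
    using n_pos by (simp add: field_simps)
  have "int n dvd \<delta> - (int (Suc k mod n) - int k)"
    unfolding \<delta>_def using polygon_disp_sum_steps_cong[OF assms(3), of n] assms(1,4,5) by simp
  moreover have "int n dvd (int (Suc k mod n) - int k) - 1"
  proof (cases "Suc k < n")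
    case False
    with assms(1) have "Suc k = n" by simp
    then have "(int (Suc k mod n) - int k) - 1 = - int n" by auto
    then show ?thesis by simp
  qed simp
  ultimately have "int n dvd \<delta> - 1"
    using dvd_add by fastforce
  with \<open>\<bar>\<delta>\<bar> < int n - 1\<close> show ?thesis
    unfolding \<delta>_def[symmetric] using dvd_imp_le_int[of "\<delta> - 1" "int n"] by arith
qed

lemma is_walk_iff_successively:
  "is_walk E u v xs \<longleftrightarrow>
     xs \<noteq> [] \<and> hd xs = u \<and> last xs = v \<and> successively (\<lambda>x y. {x, y} \<in> E) xs"
  unfolding is_walk_def successively_conv_nth by (auto simp: less_diff_conv)

lemma is_walk_singleton: "is_walk E u u [u]"
  by (simp add: is_walk_def)

lemma is_walk_rev: "is_walk E u v xs \<Longrightarrow> is_walk E v u (rev xs)"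
  unfolding is_walk_iff_successively by (auto simp: hd_rev last_rev insert_commute)

lemma is_walk_append:
  assumes "is_walk E u v xs" "is_walk E v w ys"
  shows "is_walk E u w (xs @ tl ys)"
proof -
  obtain ys' where "ys = v # ys'"
    using assms(2) unfolding is_walk_iff_successively by (cases ys) auto
  with assms show ?thesis
    unfolding is_walk_iff_successively
    by (auto simp: successively_append_iff successively_Cons)
qed

lemma set_walk_subset:
  assumes "graph_edges V E" "is_walk E u v xs" "v \<in> V"
  shows "set xs \<subseteq> V"
proof
  fix x assume "x \<in> set xs"
  then obtain i where i: "i < length xs" "x = xs ! i"
    by (auto simp: in_set_conv_nth)
  show "x \<in> V"
  proof (cases "Suc i < length xs")
    case True
    then have "{xs ! i, xs ! Suc i} \<in> E"
      using assms(2) unfolding is_walk_def by auto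
    then show ?thesis
      using assms(1) i(2) unfolding graph_edges_def by (auto simp: doubleton_eq_iff)
  next
    case False
    with i have "i = length xs - 1" "xs \<noteq> []"
      by auto
    with i have "x = last xs"
      by (simp add: last_conv_nth)
    then show ?thesis
      using assms(2,3) unfolding is_walk_def by simp
  qed
qed

lemma sum_steps_walk_potential:
  fixes \<psi> :: "point \<Rightarrow> 'a::ab_group_add"
  assumes "is_walk E u v xs" and "\<And>a b. {a, b} \<in> E \<Longrightarrow> f a b = \<psi> b - \<psi> a"
  shows "sum_steps f xs = \<psi> v - \<psi> u"
proof -
  have "sum_steps f xs = sum_steps (\<lambda>a b. \<psi> b - \<psi> a) xs"
    using assms unfolding sum_steps_def is_walk_def by (intro sum.cong) auto
  then show ?thesis
    using assms(1) sum_steps_diff unfolding is_walk_def by metis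
qed

definition graph_connected :: "point set \<Rightarrow> point set set \<Rightarrow> bool" where
  "graph_connected V E \<longleftrightarrow> (\<forall>x\<in>V. \<forall>y\<in>V. \<exists>xs. is_walk E x y xs)"

lemma graph_connected_chain:
  assumes "\<And>k. Suc k < n \<Longrightarrow> \<exists>xs. is_walk E (p k) (p (Suc k)) xs"
  shows "graph_connected (p ` {..<n}) E"
proof -
  have from_0: "\<exists>xs. is_walk E (p 0) (p j) xs" if "j < n" for j
    using that
  proof (induction j)
    case 0
    show ?case using is_walk_singleton by blast
  next
    case (Suc j)
    then obtain xs ys where "is_walk E (p 0) (p j) xs" "is_walk E (p j) (p (Suc j)) ys"
      using assms by (meson Suc_lessD)
    then show ?case using is_walk_append by blast
  qed
  show ?thesis
    unfolding graph_connected_def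
  proof (intro ballI)
    fix x y assume "x \<in> p ` {..<n}" "y \<in> p ` {..<n}"
    then obtain a b where "a < n" "b < n" "x = p a" "y = p b" by auto
    then obtain xs ys where "is_walk E (p 0) x xs" "is_walk E (p 0) y ys"
      using from_0 by blast
    then show "\<exists>zs. is_walk E x y zs"
      using is_walk_rev is_walk_append by blast
  qed
qed

lemma finite_graph_edges: "finite V \<Longrightarrow> graph_edges V E \<Longrightarrow> finite E"
  unfolding graph_edges_def by (rule finite_subset[of _ "Pow V"]) auto

lemma sum_degree_eq_twice_card_edges:
  assumes "finite V" "graph_edges V E"
  shows "(\<Sum>x\<in>V. card {e\<in>E. x \<in> e}) = 2 * card E"
proof -
  have card_filter: "card {a\<in>A. P a} = (\<Sum>a\<in>A. if P a then 1 else 0)" if "finite A" for A and P :: "'a \<Rightarrow> bool"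
    using that by (simp add: sum.If_cases Collect_conj_eq Int_commute Collect_mem_eq)
  have fin: "finite E"
    using assms by (rule finite_graph_edges)
  have "(\<Sum>x\<in>V. card {e\<in>E. x \<in> e}) = (\<Sum>x\<in>V. \<Sum>e\<in>E. if x \<in> e then 1 else 0)"
    using fin by (simp add: card_filter)
  also have "\<dots> = (\<Sum>e\<in>E. \<Sum>x\<in>V. if x \<in> e then 1 else 0)"
    by (rule sum.swap)
  also have "\<dots> = (\<Sum>e\<in>E. card {x\<in>V. x \<in> e})"
    using assms(1) by (simp add: card_filter)
  also have "\<dots> = (\<Sum>e\<in>E. 2)"
  proof (rule sum.cong)
    fix e assume "e \<in> E"
    then obtain u v where "e = {u, v}" "u \<in> V" "v \<in> V" "u \<noteq> v"
      using assms(2) unfolding graph_edges_def by blast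
    then have "{x\<in>V. x \<in> e} = {u, v}"
      by auto
    then show "card {x\<in>V. x \<in> e} = 2"
      using \<open>u \<noteq> v\<close> by simp
  qed simp
  finally show ?thesis by simp
qed

lemma exists_leaf:
  assumes "finite V" "graph_edges V E" "card E + 1 \<le> card V" "graph_connected V E" "E \<noteq> {}"
  obtains l m where "l \<in> V" "l \<noteq> m" "{e\<in>E. l \<in> e} = {{l, m}}"
proof -
  have fin: "finite E"
    using assms(1,2) by (rule finite_graph_edges)
  obtain u v where uv: "u \<in> V" "v \<in> V" "u \<noteq> v"
    using assms(2,5) unfolding graph_edges_def by blast
  have deg_pos: "card {e\<in>E. x \<in> e} \<noteq> 0" if x: "x \<in> V" for x
  proof -
    obtain y where y: "y \<in> V" "y \<noteq> x"
      using uv by blast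
    then obtain xs where xs: "is_walk E x y xs"
      using assms(4) x unfolding graph_connected_def by blast
    then have "Suc 0 < length xs"
      using y(2) unfolding is_walk_def by (cases xs) auto
    then have "{xs ! 0, xs ! Suc 0} \<in> E" "xs ! 0 = x"
      using xs unfolding is_walk_def by (auto simp: hd_conv_nth)
    then show ?thesis
      using fin by auto
  qed
  have "\<exists>l\<in>V. card {e\<in>E. l \<in> e} < 2"
  proof (rule ccontr)
    assume "\<not> ?thesis"
    then have "(\<Sum>x\<in>V. 2) \<le> (\<Sum>x\<in>V. card {e\<in>E. x \<in> e})"
      by (intro sum_mono) (simp add: not_less)
    then show False
      using sum_degree_eq_twice_card_edges[OF assms(1,2)] assms(3) by simp
  qed
  then obtain l where l: "l \<in> V" "card {e\<in>E. l \<in> e} < 2"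
    by blast
  with deg_pos have "card {e\<in>E. l \<in> e} = 1"
    by (metis One_nat_def less_2_cases)
  then obtain e where e: "{e\<in>E. l \<in> e} = {e}"
    by (rule card_1_singletonE)
  then have "e \<in> E" "l \<in> e"
    by auto
  moreover obtain a b where "e = {a, b}" "a \<noteq> b"
    using assms(2) \<open>e \<in> E\<close> unfolding graph_edges_def by blast
  ultimately obtain m where "e = {l, m}" "l \<noteq> m"
    by (metis doubleton_eq_iff insertE singletonD)
  with l(1) e show ?thesis
    using that by blast
qed

lemma walk_avoiding_leaf:
  assumes leaf: "{e\<in>E. l \<in> e} = {{l, m}}" "l \<noteq> m"
  shows "is_walk E x y xs \<Longrightarrow> x \<noteq> l \<Longrightarrow> y \<noteq> l \<Longrightarrow> \<exists>ys. is_walk (E - {{l, m}}) x y ys"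
proof (induction "length xs" arbitrary: xs rule: less_induct)
  case less
  show ?case
  proof (cases "l \<in> set xs")
    case False
    have "{a, b} \<noteq> {l, m}" if "a \<in> set xs" "b \<in> set xs" for a b
      using False that by (metis insertI1 insertE singletonD)
    then have "successively (\<lambda>x y. {x, y} \<in> E - {{l, m}}) xs"
      using less.prems(1) unfolding is_walk_iff_successively
      by (auto elim!: successively_mono)
    then show ?thesis
      using less.prems(1) unfolding is_walk_iff_successively by blast
  next
    case True
    \<comment> \<open>the walk enters and leaves the leaf through \<open>m\<close>, so the detour \<open>m, l, m\<close> can be cut out\<close>
    then obtain as bs where xs: "xs = as @ l # bs"
      by (meson split_list)
    have "as \<noteq> []" "bs \<noteq> []"
      using less.prems xs unfolding is_walk_def by auto
    then obtain as' a b bs' where "as = as' @ [a]" "bs = b # bs'"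
      by (metis append_butlast_last_id list.exhaust)
    then have xs': "xs = as' @ a # l # b # bs'"
      using xs by simp
    have "{a, l} \<in> {e\<in>E. l \<in> e}" "{l, b} \<in> {e\<in>E. l \<in> e}"
      using less.prems(1) unfolding xs' is_walk_iff_successively
      by (auto simp: successively_append_iff)
    then have "{a, l} = {l, m}" "{l, b} = {l, m}"
      unfolding leaf(1) by simp_all
    then have "a = m" "b = m"
      using leaf(2) by (metis doubleton_eq_iff)+
    then have "is_walk E x y (as' @ m # bs')"
      using less.prems(1) unfolding xs' is_walk_iff_successively
      by (auto simp: successively_append_iff hd_append)
    moreover have "length (as' @ m # bs') < length xs"
      unfolding xs' by simp
    ultimately show ?thesis
      using less.hyps less.prems(2,3) by blast
  qed
qed

lemma graph_remove_leaf:
  assumes "finite V" "graph_edges V E" "card E + 1 \<le> card V" "graph_connected V E"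
    and leaf: "l \<in> V" "l \<noteq> m" "{e\<in>E. l \<in> e} = {{l, m}}"
  shows "graph_edges (V - {l}) (E - {{l, m}})"
    and "card (E - {{l, m}}) + 1 \<le> card (V - {l})"
    and "graph_connected (V - {l}) (E - {{l, m}})"
proof -
  have "{l, m} \<in> {e\<in>E. l \<in> e}"
    unfolding leaf(3) by simp
  then have lm: "{l, m} \<in> E"
    by simp
  show "graph_edges (V - {l}) (E - {{l, m}})"
    unfolding graph_edges_def
  proof
    fix e assume e: "e \<in> E - {{l, m}}"
    have "l \<notin> e"
    proof
      assume "l \<in> e"
      with e have "e \<in> {e\<in>E. l \<in> e}" by simp
      with e show False unfolding leaf(3) by simp
    qed
    moreover obtain u v where "e = {u, v}" "u \<in> V" "v \<in> V" "u \<noteq> v"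
      using e assms(2) unfolding graph_edges_def by blast
    ultimately show "e \<in> {{u, v} |u v. u \<in> V - {l} \<and> v \<in> V - {l} \<and> u \<noteq> v}"
      by blast
  qed
  have "0 < card E"
    using lm finite_graph_edges[OF assms(1,2)] card_gt_0_iff by blast
  then show "card (E - {{l, m}}) + 1 \<le> card (V - {l})"
    using assms(1,3) lm leaf(1) by simp
  show "graph_connected (V - {l}) (E - {{l, m}})"
    using assms(4) walk_avoiding_leaf[OF leaf(3,2)] unfolding graph_connected_def by blast
qed

lemma tree_edge_potential:
  fixes f :: "point \<Rightarrow> point \<Rightarrow> 'a::ab_group_add"
  assumes antisym: "\<And>a b. f a b = - f b a"
  shows "finite V \<Longrightarrow> graph_edges V E \<Longrightarrow> card E + 1 \<le> card V \<Longrightarrow> graph_connected V E \<Longrightarrow>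
    \<exists>\<psi>. \<forall>a b. {a, b} \<in> E \<longrightarrow> f a b = \<psi> b - \<psi> a"
proof (induction "card V" arbitrary: V E rule: less_induct)
  case less
  show ?case
  proof (cases "E = {}")
    case True
    then show ?thesis by simp
  next
    case False
    obtain l m where leaf: "l \<in> V" "l \<noteq> m" "{e\<in>E. l \<in> e} = {{l, m}}"
      by (rule exists_leaf[OF less.prems False])
    have "card (V - {l}) < card V"
      using less.prems(1) leaf(1) by (rule card_Diff1_less)
    then obtain \<psi> where \<psi>: "\<forall>a b. {a, b} \<in> E - {{l, m}} \<longrightarrow> f a b = \<psi> b - \<psi> a"
      using less.hyps[of "V - {l}" "E - {{l, m}}"] graph_remove_leaf[OF less.prems leaf] less.prems(1)
      by blast
    define \<phi> where "\<phi> = \<psi>(l := \<psi> m + f m l)"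
    have "f a b = \<phi> b - \<phi> a" if ab: "{a, b} \<in> E" for a b
    proof (cases "{a, b} = {l, m}")
      case True
      then have "(a = l \<and> b = m) \<or> (a = m \<and> b = l)"
        by (metis doubleton_eq_iff)
      then show ?thesis
        unfolding \<phi>_def using leaf(2) antisym[of l m] by auto
    next
      case False
      have "l \<notin> {a, b}"
      proof
        assume "l \<in> {a, b}"
        with ab have "{a, b} \<in> {e\<in>E. l \<in> e}" by simp
        with False show False unfolding leaf(3) by simp
      qed
      then show ?thesis
        unfolding \<phi>_def using \<psi> ab False by auto
    qed
    then show ?thesis by blast
  qed
qed

lemma spanning_tree_polygon_long_side:
  assumes "1 < n" "graph_edges (polygon_vertices n) E" "card E = n - 1"
  shows "\<exists>k<n. \<forall>xs. is_walk E (polygon_vertex n k) (polygon_vertex n (Suc k mod n)) xs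
    \<longrightarrow> 4 - 4 / n \<le> walk_length xs"
proof (rule ccontr)
  let ?v = "polygon_vertex n"
  assume "\<not> ?thesis"
  then have "\<forall>k\<in>{..<n}. \<exists>xs. is_walk E (?v k) (?v (Suc k mod n)) xs \<and> walk_length xs < 4 - 4 / n"
    by (auto simp: not_le)
  then obtain W where "\<forall>k\<in>{..<n}. is_walk E (?v k) (?v (Suc k mod n)) (W k) \<and> walk_length (W k) < 4 - 4 / n"
    by (metis bchoice)
  then have W: "is_walk E (?v k) (?v (Suc k mod n)) (W k)" "walk_length (W k) < 4 - 4 / n"
    if "k < n" for k
    using that by auto
  have fin: "finite (polygon_vertices n)"
    unfolding polygon_vertices_def by simp
  have "graph_connected (polygon_vertices n) E"
    unfolding polygon_vertices_def
  proof (rule graph_connected_chain)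
    fix k assume "Suc k < n"
    then show "\<exists>xs. is_walk E (?v k) (?v (Suc k)) xs"
      using W(1)[of k] by auto
  qed
  moreover have "card E + 1 \<le> card (polygon_vertices n)"
    using assms(1,3) by (simp add: card_polygon_vertices)
  ultimately obtain \<psi> where \<psi>: "\<forall>a b. {a, b} \<in> E \<longrightarrow> polygon_disp n a b = \<psi> b - \<psi> a"
    using tree_edge_potential[of "polygon_disp n", OF polygon_disp_antisym fin assms(2)] by blast
  have step: "\<psi> (?v (Suc k mod n)) - \<psi> (?v k) = 1" if k: "k < n" for k
  proof -
    note walk = W(1)[OF k]
    have "\<psi> (?v (Suc k mod n)) - \<psi> (?v k) = sum_steps (polygon_disp n) (W k)"
      using walk \<psi> by (intro sum_steps_walk_potential[symmetric]) auto
    also have "\<dots> = 1"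
    proof (rule short_polygon_walk_disp[OF k])
      show "set (W k) \<subseteq> polygon_vertices n"
        using walk assms(1) by (intro set_walk_subset[OF assms(2) walk]) (simp add: polygon_vertices_def)
      show "W k \<noteq> []" "hd (W k) = ?v k" "last (W k) = ?v (Suc k mod n)"
        using walk unfolding is_walk_def by simp_all
      show "walk_length (W k) < 4 - 4 / n"
        using W(2)[OF k] .
    qed
    finally show ?thesis .
  qed
  define h where "h j = \<psi> (?v (j mod n))" for j
  have "(\<Sum>k<n. h (Suc k) - h k) = h n - h 0"
    by (rule sum_lessThan_telescope)
  also have "\<dots> = 0"
    unfolding h_def by simp
  finally have "(\<Sum>k<n. h (Suc k) - h k) = 0" .
  moreover have "(\<Sum>k<n. h (Suc k) - h k) = (\<Sum>k<n. 1)"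
    using step unfolding h_def by (intro sum.cong) auto
  ultimately show False
    using assms(1) by simp
qed

lemma dilation_polygon_spanning_tree:
  assumes "1 < n" "graph_edges (polygon_vertices n) E" "card E = n - 1"
  shows "ereal ((4 - 2 * sin (pi / n)) / (2 * sin (pi / n))) \<le> dilation (polygon_vertices n) E"
proof -
  define s where "s = 2 * sin (pi / n)"
  obtain k where k: "k < n" and long:
      "\<And>xs. is_walk E (polygon_vertex n k) (polygon_vertex n (Suc k mod n)) xs \<Longrightarrow> 4 - 4 / n \<le> walk_length xs"
    using spanning_tree_polygon_long_side[OF assms] by blast
  define u where "u = polygon_vertex n k"
  define v where "v = polygon_vertex n (Suc k mod n)"
  have uv: "u \<in> polygon_vertices n" "v \<in> polygon_vertices n"
    unfolding u_def v_def polygon_vertices_def using k by auto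
  have "k \<noteq> Suc k mod n"
  proof (cases "Suc k < n")
    case False
    with k have "Suc k = n" by simp
    with assms(1) show ?thesis by auto
  qed simp
  then have "u \<noteq> v"
    unfolding u_def v_def using inj_on_polygon_vertex[of n] k assms(1) by (auto dest: inj_onD)
  have "2 * (pi / n) / pi \<le> sin (pi / n)"
    using assms(1) by (intro Jordan_inequality) (simp_all add: field_simps)
  then have "4 - s \<le> 4 - 4 / n"
    unfolding s_def by simp
  then have "ereal (4 - s) \<le> graph_dist E u v"
    unfolding graph_dist_def u_def v_def using long by (force intro: Inf_greatest)
  moreover have "dist u v = s" "0 < s"
    unfolding u_def v_def s_def using k assms(1)
    by (simp_all add: dist_polygon_vertex_Suc sin_gt_zero field_simps)
  ultimately have "ereal ((4 - s) / s) \<le> graph_dist E u v / ereal (dist u v)"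
    using ereal_divide_right_mono[of "ereal (4 - s)" "graph_dist E u v" "ereal s"] by simp
  also have "\<dots> \<le> dilation (polygon_vertices n) E"
    unfolding dilation_def using uv \<open>u \<noteq> v\<close> by (intro Sup_upper) blast
  finally show ?thesis
    unfolding s_def .
qed

lemma sin_ratio_lower_bound:
  fixes x :: real
  assumes "0 < x" "x < pi"
  shows "2 / x - 1 \<le> (4 - 2 * sin x) / (2 * sin x)"
proof -
  have "0 < sin x"
    using assms by (rule sin_gt_zero)
  moreover have "sin x \<le> x"
    using assms(1) by (intro sin_x_le_x) simp
  ultimately have "2 / x \<le> 2 / sin x"
    by (simp add: frac_le)
  then show ?thesis
    using \<open>0 < sin x\<close> by (simp add: diff_divide_distrib)
qed

theorem corollary1:
  fixes n :: nat
  assumes "n > 1"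
  shows "delta_C n 0 \<ge> ereal ((4 - 2 * sin (pi / real n)) / (2 * sin (pi / real n)))
    \<and> (4 - 2 * sin (pi / real n)) / (2 * sin (pi / real n)) \<ge> 2 * real n / pi - 1"
proof
  have "ereal ((4 - 2 * sin (pi / n)) / (2 * sin (pi / n))) \<le> min_dilation (polygon_vertices n) 0"
    unfolding min_dilation_def using dilation_polygon_spanning_tree[OF assms]
    by (intro Inf_greatest) (auto simp: card_polygon_vertices)
  also have "\<dots> \<le> delta_C n 0"
    unfolding delta_C_def using card_polygon_vertices convex_position_polygon_vertices
    by (intro Sup_upper) (auto simp: polygon_vertices_def)
  finally show "delta_C n 0 \<ge> ereal ((4 - 2 * sin (pi / n)) / (2 * sin (pi / n)))" .
next
  have "0 < pi / n" "pi / n < pi"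
    using assms by (simp_all add: field_simps)
  then show "(4 - 2 * sin (pi / n)) / (2 * sin (pi / n)) \<ge> 2 * real n / pi - 1"
    using sin_ratio_lower_bound[of "pi / n"] by simp
qed

end
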